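(* Let $d\geq3$ and let $x_1,\dots,x_{d-1}$ be real numbers with $0<x_i<1$ for all $i$ and $x_i\neq x_j$ for at least one pair $(i,j)$. Let $\Omega$ be the quantum channel with Kraus operators $A_0=\mathrm{diag}(1,x_1,\dots,x_{d-1})$ and, for $m=1,\dots,d-1$, $(A_m)_{ij}=\sqrt{1-x_m^2}\,\delta_{0i}\delta_{mj}$ ($i,j=0,\dots,d-1$), and let $\hat\Omega$ be its dual map, $\hat\Omega(X)=\sum_m A_m^\dagger XA_m$. Let $|\Phi^+\rangle=\frac1{\sqrt d}\sum_{i=0}^{d-1}|ii\rangle$, and let $|\psi'\rangle\in\mathbb{C}^d\otimes\mathbb{C}^d$ be a unit eigenvector of $\rho_{\Phi^+,\hat\Omega}=(\mathcal{I}\otimes\hat\Omega)(|\Phi^+\rangle\langle\Phi^+|)$ corresponding to its largest eigenvalue $\lambda_{\max}(\rho_{\Phi^+,\hat\Omega})$. Then $\lambda_{\max}(\rho_{\Phi^+,\Omega})=\mathbb{F}(\rho_{\psi',\Omega})$, where $\rho_{\Phi^+,\Omega}=(\mathcal{I}\otimes\Omega)(|\Phi^+\rangle\langle\Phi^+|)$ and $\rho_{\psi',\Omega}=(\mathcal{I}\otimes\Omega)(|\psi'\rangle\langle\psi'|)$. Moreover, $|\psi'\rangle$ is not maximally entangled.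
   Context: The singlet fraction of a two-qudit state $\rho$ is $\mathbb{F}(\rho)=\max_{|\Phi\rangle}\langle\Phi|\rho|\Phi\rangle$, the maximum over all maximally entangled states $|\Phi\rangle\in\mathbb{C}^d\otimes\mathbb{C}^d$. *)

theory Defs
  imports "Jordan_Normal_Form.Schur_Decomposition"
begin

text \<open>Kronecker (tensor) product; basis vector |i>|j> of C^p (x) C^q has index i*q + j.\<close>
definition kron :: "complex mat \<Rightarrow> complex mat \<Rightarrow> complex mat" where
  "kron A B = mat (dim_row A * dim_row B) (dim_col A * dim_col B)
     (\<lambda>(i,j). A $$ (i div dim_row B, j div dim_col B) * B $$ (i mod dim_row B, j mod dim_col B))"

definition proj :: "complex vec \<Rightarrow> complex mat" where
  "proj v = mat (dim_vec v) (dim_vec v) (\<lambda>(i,j). v $ i * cnj (v $ j))"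

definition channel :: "nat \<Rightarrow> (nat \<Rightarrow> complex mat) \<Rightarrow> complex mat \<Rightarrow> complex mat" where
  "channel d K X = mat d d (\<lambda>(i,j). \<Sum>m<d. (K m * X * mat_adjoint (K m)) $$ (i,j))"

definition ext_channel :: "nat \<Rightarrow> (nat \<Rightarrow> complex mat) \<Rightarrow> complex mat \<Rightarrow> complex mat" where
  "ext_channel d K \<rho> = mat (d*d) (d*d) (\<lambda>(i,j).
     \<Sum>m<d. (kron (1\<^sub>m d) (K m) * \<rho> * mat_adjoint (kron (1\<^sub>m d) (K m))) $$ (i,j))"

definition kraus :: "nat \<Rightarrow> (nat \<Rightarrow> real) \<Rightarrow> nat \<Rightarrow> complex mat" where
  "kraus d x m = (if m = 0
     then mat d d (\<lambda>(i,j). if i = j then (if i = 0 then 1 else complex_of_real (x i)) else 0)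
     else mat d d (\<lambda>(i,j). if i = 0 \<and> j = m then complex_of_real (sqrt (1 - (x m)^2)) else 0))"

text \<open>Kraus operators of the dual map: A_m^dagger X A_m.\<close>
definition kraus_dual :: "nat \<Rightarrow> (nat \<Rightarrow> real) \<Rightarrow> nat \<Rightarrow> complex mat" where
  "kraus_dual d x m = mat_adjoint (kraus d x m)"

definition phi_plus :: "nat \<Rightarrow> complex vec" where
  "phi_plus d = vec (d*d) (\<lambda>k. if k div d = k mod d then complex_of_real (1 / sqrt (real d)) else 0)"

text \<open>Largest eigenvalue (used for Hermitian matrices, whose eigenvalues are real).\<close>
definition lambda_max :: "complex mat \<Rightarrow> real" where
  "lambda_max A = Max (Re ` {k. eigenvalue A k})"

definition ptrace2 :: "nat \<Rightarrow> complex mat \<Rightarrow> complex mat" where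
  "ptrace2 d \<rho> = mat d d (\<lambda>(i,j). \<Sum>k<d. \<rho> $$ (i*d+k, j*d+k))"

definition max_entangled :: "nat \<Rightarrow> complex vec \<Rightarrow> bool" where
  "max_entangled d v \<longleftrightarrow> dim_vec v = d*d \<and> v \<bullet>c v = 1
      \<and> ptrace2 d (proj v) = complex_of_real (1 / real d) \<cdot>\<^sub>m 1\<^sub>m d"

definition singlet_fraction :: "nat \<Rightarrow> complex mat \<Rightarrow> real" where
  "singlet_fraction d \<rho> = Sup {Re ((\<rho> *\<^sub>v \<Phi>) \<bullet>c \<Phi>) | \<Phi>. max_entangled d \<Phi>}"

end

theory Submission
  imports Defs "HOL-Analysis.Convex"
begin

(*
  Write X_0 = 1, X_m = x_m and S = X_0^2 + ... + X_(d-1)^2. For a Kraus family K_m the state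
  (I (x) K)(|u><u|) is the sum of the projectors onto W_m = (I (x) K_m) u, so its quadratic form
  at z is the sum of the |<z, W_m>|^2. For u = Phi+ and either Omega or its dual, W_0 is a
  multiple of v = sum_a X_a |aa> and every other W_m is a multiple of a single basis vector off
  the diagonal; Cauchy-Schwarz bounds the form by (S/d) |z|^2 and v attains the bound, so both
  largest eigenvalues equal S/d. Solving the eigenvalue equation of the dual state coordinatewise
  (using 1 - x_m^2 < S) shows that psi' = c v with |c|^2 = 1/S. Its reduced state has the unequal
  eigenvalues X_a^2/S, so psi' is not maximally entangled. Finally, every row of a maximally
  entangled Phi has squared norm 1/d, and an elementary inequality turns this into
  <Phi| rho_{psi',Omega} |Phi> <= S/d, with equality at Phi+.
*)

lemma mat_adjoint_altdef:
  "mat_adjoint (A::complex mat) = mat (dim_col A) (dim_row A) (\<lambda>(i,j). cnj (A $$ (j,i)))"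
  by (rule eq_matI) (auto simp: mat_adjoint_def mat_of_rows_def)

lemma cscalar_prod_altdef:
  "w \<in> carrier_vec n \<Longrightarrow> z \<bullet>c w = (\<Sum>j<n. z $ j * cnj (w $ j))"
  by (simp add: scalar_prod_def atLeast0LessThan)

lemma cscalar_prod_self: "z \<bullet>c z = of_real (\<Sum>i<dim_vec z. (cmod (z $ i))\<^sup>2)"
  by (simp add: scalar_prod_def atLeast0LessThan complex_norm_square del: of_real_power)

lemma cscalar_prod_smult_unit_vec:
  assumes "z \<in> carrier_vec n" and "i < n"
  shows "z \<bullet>c (c \<cdot>\<^sub>v unit_vec n i) = z $ i * cnj c"
proof -
  have "z $ j * (cnj c * cnj (if j = i then 1 else 0)) = (if j = i then z $ i * cnj c else 0)" for j
    by simp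
  then show ?thesis using assms(2) by (simp add: cscalar_prod_altdef[of _ n])
qed

lemma pair_index_less:
  fixes a b d :: nat
  assumes "a < d" and "b < d"
  shows "a*d + b < d*d"
proof -
  have "a*d + b < (a+1)*d" using assms by simp
  also have "\<dots> \<le> d*d" using assms by (intro mult_right_mono) auto
  finally show ?thesis .
qed

lemma pair_index_eq_iff:
  fixes a b a' b' d :: nat
  assumes "b < d" and "b' < d"
  shows "a*d + b = a'*d + b' \<longleftrightarrow> a = a' \<and> b = b'"
  by (metis assms add_diff_cancel_right' mod_mult_self3 mod_less nonzero_mult_div_cancel_right
      div_mult_self3 div_less not_less0 add.commute less_nat_zero_code)

lemma pair_index_cases:
  fixes k d :: nat
  assumes "k < d*d"
  obtains a b where "a < d" and "b < d" and "k = a*d + b"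
proof
  show "k div d < d" using assms by (simp add: less_mult_imp_div_less)
  show "k mod d < d" using assms by (cases d) auto
qed simp

lemma sum_pair_index:
  fixes n d :: nat
  shows "(\<Sum>k<n*d. f k) = (\<Sum>a<n. \<Sum>b<d. f (a*d + b))"
proof (induction n)
  case (Suc n)
  have "(\<Sum>k<Suc n*d. f k) = (\<Sum>k<n*d. f k) + (\<Sum>k=n*d..<n*d+d. f k)"
    using sum.atLeastLessThan_concat[of 0 "n*d" "n*d+d" f]
    by (simp add: atLeast0LessThan add.commute)
  also have "(\<Sum>k=n*d..<n*d+d. f k) = (\<Sum>b<d. f (n*d + b))"
    using sum.shift_bounds_nat_ivl[of f 0 "n*d" d] by (simp add: atLeast0LessThan add.commute)
  finally show ?case using Suc by simp
qed simp

lemma sum_lessThan_split_0: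
  "0 < (d::nat) \<Longrightarrow> (\<Sum>m<d. f m) = f 0 + (\<Sum>m\<in>{1..<d}. f m)"
proof -
  assume "0 < d"
  then have "{..<d} = insert 0 {1..<d}" by auto
  then show ?thesis by simp
qed

lemma kron_one_mult_vec_pair_index:
  assumes K: "K \<in> carrier_mat d d" and u: "u \<in> carrier_vec (d*d)" and a: "a < d" and b: "b < d"
  shows "(kron (1\<^sub>m d) K *\<^sub>v u) $ (a*d + b) = (\<Sum>c<d. K $$ (b,c) * u $ (a*d + c))"
proof -
  have "(kron (1\<^sub>m d) K *\<^sub>v u) $ (a*d + b) = (\<Sum>j<d*d. kron (1\<^sub>m d) K $$ (a*d + b, j) * u $ j)"
    using K u pair_index_less[OF a b]
    by (simp add: mult_mat_vec_def scalar_prod_def row_def kron_def atLeast0LessThan)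
  also have "\<dots> = (\<Sum>a'<d. \<Sum>c<d. kron (1\<^sub>m d) K $$ (a*d + b, a'*d + c) * u $ (a'*d + c))"
    by (rule sum_pair_index)
  also have "\<dots> = (\<Sum>a'<d. \<Sum>c<d. if a = a' then K $$ (b,c) * u $ (a'*d + c) else 0)"
    using K a b by (intro sum.cong refl) (auto simp: kron_def pair_index_less)
  also have "\<dots> = (\<Sum>c<d. K $$ (b,c) * u $ (a*d + c))"
    using a by (subst sum.swap) (simp add: sum.delta)
  finally show ?thesis .
qed

section \<open>Sums of rank-one projectors\<close>

lemma mult_proj_mult_adjoint:
  assumes A: "A \<in> carrier_mat n n" and u: "u \<in> carrier_vec n"
  shows "A * proj u * mat_adjoint A = proj (A *\<^sub>v u)"
proof (rule eq_matI)
  fix i j assume "i < dim_row (proj (A *\<^sub>v u))" and "j < dim_col (proj (A *\<^sub>v u))"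
  then have i: "i < n" and j: "j < n" using A by (auto simp: proj_def)
  have Au: "(A *\<^sub>v u) $ k = (\<Sum>l<n. A $$ (k,l) * u $ l)" if "k < n" for k
    using A u that by (simp add: mult_mat_vec_def scalar_prod_def atLeast0LessThan row_def)
  have AP: "(A * proj u) $$ (i,l) = (A *\<^sub>v u) $ i * cnj (u $ l)" if "l < n" for l
    using A u i that
    by (simp add: proj_def scalar_prod_def atLeast0LessThan row_def col_def Au sum_distrib_right mult.assoc)
  have "(A * proj u * mat_adjoint A) $$ (i,j) = (\<Sum>l<n. (A * proj u) $$ (i,l) * cnj (A $$ (j,l)))"
    using A u i j by (simp add: mat_adjoint_altdef scalar_prod_def proj_def atLeast0LessThan)
  also have "\<dots> = (A *\<^sub>v u) $ i * cnj ((A *\<^sub>v u) $ j)"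
    by (simp add: AP Au[OF j] sum_distrib_left mult_ac)
  finally show "(A * proj u * mat_adjoint A) $$ (i,j) = proj (A *\<^sub>v u) $$ (i,j)"
    using A i j by (simp add: proj_def)
qed (use A u in \<open>auto simp: proj_def mat_adjoint_altdef\<close>)

definition proj_sum :: "nat \<Rightarrow> nat \<Rightarrow> (nat \<Rightarrow> complex vec) \<Rightarrow> complex mat" where
  "proj_sum n k W = mat n n (\<lambda>(i,j). \<Sum>m<k. W m $ i * cnj (W m $ j))"

lemma proj_sum_carrier: "proj_sum n k W \<in> carrier_mat n n"
  by (simp add: proj_sum_def)

lemma proj_sum_mult_vec:
  assumes z: "z \<in> carrier_vec n" and W: "\<And>m. m < k \<Longrightarrow> W m \<in> carrier_vec n"
  shows "proj_sum n k W *\<^sub>v z = vec n (\<lambda>i. \<Sum>m<k. (z \<bullet>c W m) * W m $ i)"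
proof (rule eq_vecI)
  fix i assume "i < dim_vec (vec n (\<lambda>i. \<Sum>m<k. (z \<bullet>c W m) * W m $ i))"
  then have i: "i < n" by simp
  have "(proj_sum n k W *\<^sub>v z) $ i = (\<Sum>j<n. \<Sum>m<k. W m $ i * cnj (W m $ j) * z $ j)"
    using z i
    by (simp add: proj_sum_def mult_mat_vec_def scalar_prod_def row_def atLeast0LessThan sum_distrib_right)
  also have "\<dots> = (\<Sum>m<k. (z \<bullet>c W m) * W m $ i)"
    by (subst sum.swap) (simp add: cscalar_prod_altdef[OF W] sum_distrib_left mult_ac)
  finally show "(proj_sum n k W *\<^sub>v z) $ i = vec n (\<lambda>i. \<Sum>m<k. (z \<bullet>c W m) * W m $ i) $ i"
    using i by simp
qed (simp add: proj_sum_def)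

lemma proj_sum_quadratic_form:
  assumes z: "z \<in> carrier_vec n" and W: "\<And>m. m < k \<Longrightarrow> W m \<in> carrier_vec n"
  shows "(proj_sum n k W *\<^sub>v z) \<bullet>c z = of_real (\<Sum>m<k. (cmod (z \<bullet>c W m))\<^sup>2)"
proof -
  have "(proj_sum n k W *\<^sub>v z) \<bullet>c z = (\<Sum>i<n. (\<Sum>m<k. (z \<bullet>c W m) * W m $ i) * cnj (z $ i))"
    using z by (simp add: proj_sum_mult_vec[OF z W] cscalar_prod_altdef[OF z])
  also have "\<dots> = (\<Sum>m<k. (z \<bullet>c W m) * cnj (z \<bullet>c W m))"
    by (subst sum_distrib_right, subst sum.swap)
      (simp add: cscalar_prod_altdef[OF W] sum_distrib_left mult_ac)
  finally show ?thesis by (simp add: complex_norm_square del: of_real_power)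
qed

lemma eigenvalue_proj_sum_le:
  assumes ev: "eigenvalue (proj_sum n k W) e"
    and W: "\<And>m. m < k \<Longrightarrow> W m \<in> carrier_vec n"
    and bound: "\<And>z. z \<in> carrier_vec n \<Longrightarrow>
      (\<Sum>m<k. (cmod (z \<bullet>c W m))\<^sup>2) \<le> \<mu> * (\<Sum>i<n. (cmod (z $ i))\<^sup>2)"
  shows "Re e \<le> \<mu>"
proof -
  obtain z where z: "z \<in> carrier_vec n" "z \<noteq> 0\<^sub>v n" "proj_sum n k W *\<^sub>v z = e \<cdot>\<^sub>v z"
    using ev proj_sum_carrier[of n k W] unfolding eigenvalue_def eigenvector_def by auto
  define N where "N = (\<Sum>i<n. (cmod (z $ i))\<^sup>2)"
  obtain i where "i < n" "z $ i \<noteq> 0"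
    using z(1,2) by (metis carrier_vecD eq_vecI index_zero_vec(1,2))
  then have N: "0 < N" unfolding N_def by (intro sum_pos2[of _ i]) auto
  have "of_real (\<Sum>m<k. (cmod (z \<bullet>c W m))\<^sup>2) = (proj_sum n k W *\<^sub>v z) \<bullet>c z"
    by (rule proj_sum_quadratic_form[of z n k W, OF z(1) W, symmetric])
  also have "\<dots> = (e \<cdot>\<^sub>v z) \<bullet>c z"
    using z(3) by simp
  also have "\<dots> = e * (z \<bullet>c z)"
    using z(1) by (simp add: scalar_prod_def sum_distrib_left mult.assoc)
  also have "\<dots> = e * of_real N"
    using z(1) by (simp add: cscalar_prod_self N_def)
  finally have "Re (of_real (\<Sum>m<k. (cmod (z \<bullet>c W m))\<^sup>2)) = Re (e * of_real N)"
    by (rule arg_cong)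
  then have "Re e * N = (\<Sum>m<k. (cmod (z \<bullet>c W m))\<^sup>2)"
    by (simp del: of_real_sum of_real_power)
  then show ?thesis
    using bound[OF z(1), folded N_def] N by (metis mult_le_cancel_right_pos)
qed

lemma lambda_max_eqI:
  assumes A: "A \<in> carrier_mat n n" and ev: "eigenvalue A (of_real \<mu>)"
    and bound: "\<And>e. eigenvalue A e \<Longrightarrow> Re e \<le> \<mu>"
  shows "lambda_max A = \<mu>"
proof -
  have "char_poly A \<noteq> 0" using degree_monic_char_poly[OF A] by auto
  then have "finite {e. poly (char_poly A) e = 0}" by (rule poly_roots_finite)
  then have "finite {e. eigenvalue A e}" using eigenvalue_root_char_poly[OF A] by simp
  then show ?thesis unfolding lambda_max_def
    by (intro Max_eqI) (use ev bound in \<open>auto intro!: image_eqI[of _ Re "of_real \<mu>"]\<close>)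
qed

section \<open>Schmidt-diagonal vectors\<close>

definition diag_vec :: "nat \<Rightarrow> (nat \<Rightarrow> complex) \<Rightarrow> complex vec" where
  "diag_vec d g = vec (d*d) (\<lambda>k. if k div d = k mod d then g (k mod d) else 0)"

lemma diag_vec_carrier [simp]: "diag_vec d g \<in> carrier_vec (d*d)"
  and dim_diag_vec [simp]: "dim_vec (diag_vec d g) = d*d"
  by (simp_all add: diag_vec_def)

lemma diag_vec_pair_index:
  "a < d \<Longrightarrow> b < d \<Longrightarrow> diag_vec d g $ (a*d + b) = (if a = b then g a else 0)"
  using pair_index_less[of a d b] by (simp add: diag_vec_def)

lemma phi_plus_eq_diag_vec: "phi_plus d = diag_vec d (\<lambda>_. of_real (1 / sqrt (real d)))"
  by (simp only: phi_plus_def diag_vec_def)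

lemma phi_plus_carrier: "phi_plus d \<in> carrier_vec (d*d)"
  by (simp add: phi_plus_def)

lemma inv_sqrt_mult_self: "of_real (1 / sqrt (real d)) * of_real (1 / sqrt (real d)) = (of_real (1 / real d) :: complex)"
  by (simp flip: of_real_mult)

lemma cmod_inv_sqrt_sq: "(cmod (of_real (1 / sqrt (real d)) :: complex))\<^sup>2 = 1 / real d"
  by (simp add: norm_divide power_divide)

lemma smult_diag_vec: "c \<cdot>\<^sub>v diag_vec d g = diag_vec d (\<lambda>a. c * g a)"
  by (rule eq_vecI) (auto simp: diag_vec_def)

lemma cscalar_prod_diag_vec:
  assumes "z \<in> carrier_vec (d*d)"
  shows "z \<bullet>c diag_vec d g = (\<Sum>a<d. z $ (a*d + a) * cnj (g a))"
proof -
  have "z \<bullet>c diag_vec d g = (\<Sum>a<d. \<Sum>b<d. z $ (a*d + b) * cnj (diag_vec d g $ (a*d + b)))"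
    by (simp add: cscalar_prod_altdef[of _ "d*d"] sum_pair_index)
  also have "\<dots> = (\<Sum>a<d. \<Sum>b<d. if b = a then z $ (a*d + a) * cnj (g a) else 0)"
    by (intro sum.cong refl) (auto simp: diag_vec_pair_index)
  finally show ?thesis by simp
qed

lemma cscalar_prod_diag_vec_self:
  "diag_vec d g \<bullet>c diag_vec d g = of_real (\<Sum>a<d. (cmod (g a))\<^sup>2)"
  by (simp add: cscalar_prod_diag_vec diag_vec_pair_index complex_norm_square del: of_real_power)

lemma ptrace2_proj_diag_vec:
  "ptrace2 d (proj (diag_vec d g)) = mat d d (\<lambda>(i,j). if i = j then of_real ((cmod (g i))\<^sup>2) else 0)"
proof (rule eq_matI)
  fix i j assume "i < dim_row (mat d d (\<lambda>(i,j). if i = j then of_real ((cmod (g i))\<^sup>2) else 0))"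
    and "j < dim_col (mat d d (\<lambda>(i,j). if i = j then of_real ((cmod (g i))\<^sup>2) else (0::complex)))"
  then have i: "i < d" and j: "j < d" by auto
  have "ptrace2 d (proj (diag_vec d g)) $$ (i,j)
      = (\<Sum>k<d. diag_vec d g $ (i*d + k) * cnj (diag_vec d g $ (j*d + k)))"
    using i j by (auto simp: ptrace2_def proj_def pair_index_less intro!: sum.cong)
  also have "\<dots> = (\<Sum>k<d. if k = i then (if i = j then g i * cnj (g i) else 0) else 0)"
    using i j by (intro sum.cong refl) (auto simp: diag_vec_pair_index)
  finally show "ptrace2 d (proj (diag_vec d g)) $$ (i,j)
      = mat d d (\<lambda>(i,j). if i = j then of_real ((cmod (g i))\<^sup>2) else 0) $$ (i,j)"
    using i j by (simp add: complex_norm_square del: of_real_power)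
qed (simp_all add: ptrace2_def)

lemma max_entangled_row_norm:
  assumes me: "max_entangled d \<Phi>" and a: "a < d"
  shows "(\<Sum>b<d. (cmod (\<Phi> $ (a*d + b)))\<^sup>2) = 1 / real d"
proof -
  have dim: "dim_vec \<Phi> = d*d"
    and pt: "ptrace2 d (proj \<Phi>) = complex_of_real (1 / real d) \<cdot>\<^sub>m 1\<^sub>m d"
    using me unfolding max_entangled_def by auto
  have "ptrace2 d (proj \<Phi>) $$ (a,a) = of_real (\<Sum>b<d. (cmod (\<Phi> $ (a*d + b)))\<^sup>2)"
    using a dim pair_index_less[OF a]
    by (auto simp: ptrace2_def proj_def complex_norm_square simp del: of_real_power intro!: sum.cong)
  moreover have "ptrace2 d (proj \<Phi>) $$ (a,a) = of_real (1 / real d)"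
    using pt a by simp
  ultimately show ?thesis by (metis of_real_eq_iff)
qed

lemma max_entangled_diag_vec_iff:
  assumes "0 < d"
  shows "max_entangled d (diag_vec d g) \<longleftrightarrow> (\<forall>a<d. (cmod (g a))\<^sup>2 = 1 / real d)"
proof
  assume "max_entangled d (diag_vec d g)"
  then have pt: "ptrace2 d (proj (diag_vec d g)) = of_real (1 / real d) \<cdot>\<^sub>m 1\<^sub>m d"
    unfolding max_entangled_def by blast
  have "(of_real ((cmod (g a))\<^sup>2) :: complex) = of_real (1 / real d)" if "a < d" for a
    using arg_cong[OF pt, of "\<lambda>A. A $$ (a,a)"] that by (simp add: ptrace2_proj_diag_vec)
  then show "\<forall>a<d. (cmod (g a))\<^sup>2 = 1 / real d"
    by (metis of_real_eq_iff)
next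
  assume g: "\<forall>a<d. (cmod (g a))\<^sup>2 = 1 / real d"
  have "diag_vec d g \<bullet>c diag_vec d g = of_real (\<Sum>a<d. (cmod (g a))\<^sup>2)"
    by (rule cscalar_prod_diag_vec_self)
  also have "\<dots> = 1" using g assms by simp
  finally show "max_entangled d (diag_vec d g)"
    using g unfolding max_entangled_def ptrace2_proj_diag_vec by (auto intro!: eq_matI)
qed

lemma max_entangled_phi_plus: "0 < d \<Longrightarrow> max_entangled d (phi_plus d)"
  unfolding phi_plus_eq_diag_vec by (simp add: max_entangled_diag_vec_iff norm_divide power_divide)

section \<open>The Kraus operators on Schmidt-diagonal vectors\<close>

definition kraus0_diag :: "(nat \<Rightarrow> real) \<Rightarrow> nat \<Rightarrow> real" where
  "kraus0_diag x a = (if a = 0 then 1 else x a)"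

definition decay_amp :: "(nat \<Rightarrow> real) \<Rightarrow> nat \<Rightarrow> real" where
  "decay_amp x m = sqrt (1 - (x m)\<^sup>2)"

lemma kraus_carrier: "kraus d x m \<in> carrier_mat d d"
  by (simp add: kraus_def)

lemma kraus_dual_carrier: "kraus_dual d x m \<in> carrier_mat d d"
  by (simp add: kraus_dual_def mat_adjoint_altdef kraus_def)

lemma kraus_0_index:
  "a < d \<Longrightarrow> b < d \<Longrightarrow> kraus d x 0 $$ (a,b) = (if a = b then of_real (kraus0_diag x a) else 0)"
  by (simp add: kraus_def kraus0_diag_def)

lemma kraus_index:
  "0 < m \<Longrightarrow> a < d \<Longrightarrow> b < d \<Longrightarrow>
    kraus d x m $$ (a,b) = (if a = 0 \<and> b = m then of_real (decay_amp x m) else 0)"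
  by (simp add: kraus_def decay_amp_def)

lemma kraus_dual_index:
  "0 < m \<Longrightarrow> a < d \<Longrightarrow> b < d \<Longrightarrow>
    kraus_dual d x m $$ (a,b) = (if a = m \<and> b = 0 then of_real (decay_amp x m) else 0)"
  by (auto simp: kraus_dual_def mat_adjoint_altdef kraus_def decay_amp_def)

lemma kraus_dual_0: "kraus_dual d x 0 = kraus d x 0"
  by (rule eq_matI) (auto simp: kraus_dual_def mat_adjoint_altdef kraus_def)

definition kraus_image :: "nat \<Rightarrow> (nat \<Rightarrow> complex mat) \<Rightarrow> complex vec \<Rightarrow> nat \<Rightarrow> complex vec" where
  "kraus_image d K u m = kron (1\<^sub>m d) (K m) *\<^sub>v u"

lemma kraus_image_carrier: "K m \<in> carrier_mat d d \<Longrightarrow> kraus_image d K u m \<in> carrier_vec (d*d)"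
  by (simp add: kraus_image_def kron_def carrier_vecI)

lemma kraus_or_dual_carrier:
  "K = kraus d x \<or> K = kraus_dual d x \<Longrightarrow> K m \<in> carrier_mat d d"
  using kraus_carrier kraus_dual_carrier by blast

lemma kraus_or_dual_image_0:
  "K = kraus d x \<or> K = kraus_dual d x \<Longrightarrow> kraus_image d K u 0 = kraus_image d (kraus d x) u 0"
  by (auto simp: kraus_image_def kraus_dual_0)

lemma ext_channel_proj:
  assumes K: "\<And>m. m < d \<Longrightarrow> K m \<in> carrier_mat d d" and u: "u \<in> carrier_vec (d*d)"
  shows "ext_channel d K (proj u) = proj_sum (d*d) d (kraus_image d K u)"
proof (rule eq_matI)
  fix i j assume "i < dim_row (proj_sum (d*d) d (kraus_image d K u))"
    and "j < dim_col (proj_sum (d*d) d (kraus_image d K u))"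
  then have i: "i < d*d" and j: "j < d*d" by (simp_all add: proj_sum_def)
  have conj: "kron (1\<^sub>m d) (K m) * proj u * mat_adjoint (kron (1\<^sub>m d) (K m)) = proj (kraus_image d K u m)"
    if "m < d" for m
    unfolding kraus_image_def
    by (rule mult_proj_mult_adjoint[OF _ u]) (use K[OF that] in \<open>simp add: kron_def\<close>)
  have dim: "dim_vec (kraus_image d K u m) = d*d" if "m < d" for m
    using kraus_image_carrier[of K m d u, OF K[OF that]] by simp
  have "ext_channel d K (proj u) $$ (i,j)
      = (\<Sum>m<d. (kron (1\<^sub>m d) (K m) * proj u * mat_adjoint (kron (1\<^sub>m d) (K m))) $$ (i,j))"
    unfolding ext_channel_def by (simp only: index_mat(1)[OF i j] prod.case)
  also have "\<dots> = (\<Sum>m<d. proj (kraus_image d K u m) $$ (i,j))"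
    by (rule sum.cong) (simp_all add: conj)
  also have "\<dots> = proj_sum (d*d) d (kraus_image d K u) $$ (i,j)"
    using i j by (simp add: proj_def proj_sum_def dim)
  finally show "ext_channel d K (proj u) $$ (i,j) = proj_sum (d*d) d (kraus_image d K u) $$ (i,j)" .
qed (simp_all add: ext_channel_def proj_sum_def)

lemma kraus_image_0:
  "kraus_image d (kraus d x) (diag_vec d g) 0 = diag_vec d (\<lambda>a. of_real (kraus0_diag x a) * g a)"
proof (rule eq_vecI)
  fix k assume "k < dim_vec (diag_vec d (\<lambda>a. of_real (kraus0_diag x a) * g a))"
  then have "k < d*d" by simp
  then obtain a b where a: "a < d" and b: "b < d" and k: "k = a*d + b"
    by (rule pair_index_cases)
  have "kraus_image d (kraus d x) (diag_vec d g) 0 $ k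
      = (\<Sum>c<d. if c = b then of_real (kraus0_diag x b) * diag_vec d g $ (a*d + c) else 0)"
    unfolding k kraus_image_def kron_one_mult_vec_pair_index[OF kraus_carrier diag_vec_carrier a b]
    using b by (intro sum.cong refl) (auto simp: kraus_0_index)
  then show "kraus_image d (kraus d x) (diag_vec d g) 0 $ k
      = diag_vec d (\<lambda>a. of_real (kraus0_diag x a) * g a) $ k"
    using a b by (simp add: k diag_vec_pair_index)
qed (simp add: kraus_image_def kron_def kraus_def)

lemma kraus_image_pos:
  assumes "0 < m" and "m < d"
  shows "kraus_image d (kraus d x) (diag_vec d g) m
    = (of_real (decay_amp x m) * g m) \<cdot>\<^sub>v unit_vec (d*d) (m*d)"
proof (rule eq_vecI)
  fix k assume "k < dim_vec ((of_real (decay_amp x m) * g m) \<cdot>\<^sub>v unit_vec (d*d) (m*d))"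
  then have "k < d*d" by simp
  then obtain a b where a: "a < d" and b: "b < d" and k: "k = a*d + b"
    by (rule pair_index_cases)
  have "kraus_image d (kraus d x) (diag_vec d g) m $ k
      = (\<Sum>c<d. if c = m then (if b = 0 then of_real (decay_amp x m) * diag_vec d g $ (a*d + m) else 0) else 0)"
    unfolding k kraus_image_def kron_one_mult_vec_pair_index[OF kraus_carrier diag_vec_carrier a b]
    using b assms by (intro sum.cong refl) (auto simp: kraus_index)
  also have "\<dots> = (if a = m \<and> b = 0 then of_real (decay_amp x m) * g m else 0)"
    using a assms by (simp add: diag_vec_pair_index)
  also have "\<dots> = ((of_real (decay_amp x m) * g m) \<cdot>\<^sub>v unit_vec (d*d) (m*d)) $ k"
    using pair_index_eq_iff[of b d 0 a m] pair_index_less[OF a b] b assms by (simp add: k)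
  finally show "kraus_image d (kraus d x) (diag_vec d g) m $ k
      = ((of_real (decay_amp x m) * g m) \<cdot>\<^sub>v unit_vec (d*d) (m*d)) $ k" .
qed (simp add: kraus_image_def kron_def kraus_def)

lemma kraus_dual_image_pos:
  assumes "0 < m" and "m < d"
  shows "kraus_image d (kraus_dual d x) (diag_vec d g) m
    = (of_real (decay_amp x m) * g 0) \<cdot>\<^sub>v unit_vec (d*d) m"
proof (rule eq_vecI)
  fix k assume "k < dim_vec ((of_real (decay_amp x m) * g 0) \<cdot>\<^sub>v unit_vec (d*d) m)"
  then have "k < d*d" by simp
  then obtain a b where a: "a < d" and b: "b < d" and k: "k = a*d + b"
    by (rule pair_index_cases)
  have "kraus_image d (kraus_dual d x) (diag_vec d g) m $ k
      = (\<Sum>c<d. if c = 0 then (if b = m then of_real (decay_amp x m) * diag_vec d g $ (a*d) else 0) else 0)"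
    unfolding k kraus_image_def kron_one_mult_vec_pair_index[OF kraus_dual_carrier diag_vec_carrier a b]
    using b assms by (intro sum.cong refl) (auto simp: kraus_dual_index)
  also have "\<dots> = (if a = 0 \<and> b = m then of_real (decay_amp x m) * g 0 else 0)"
    using diag_vec_pair_index[of a d 0 g] a assms by auto
  also have "\<dots> = ((of_real (decay_amp x m) * g 0) \<cdot>\<^sub>v unit_vec (d*d) m) $ k"
    using pair_index_eq_iff[of b d m a 0] pair_index_less[OF a b] b assms by (auto simp: k unit_vec_def)
  finally show "kraus_image d (kraus_dual d x) (diag_vec d g) m $ k
      = ((of_real (decay_amp x m) * g 0) \<cdot>\<^sub>v unit_vec (d*d) m) $ k" .
qed (simp add: kraus_image_def kron_def kraus_dual_carrier[THEN carrier_matD(1)])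

lemma sum_sq_cscalar_kraus_image:
  assumes d: "0 < d" and z: "z \<in> carrier_vec (d*d)"
  shows "(\<Sum>m<d. (cmod (z \<bullet>c kraus_image d (kraus d x) (diag_vec d g) m))\<^sup>2)
    = (cmod (\<Sum>a<d. z $ (a*d + a) * of_real (kraus0_diag x a) * cnj (g a)))\<^sup>2
      + (\<Sum>m\<in>{1..<d}. (cmod (z $ (m*d)))\<^sup>2 * (decay_amp x m * cmod (g m))\<^sup>2)"
proof -
  have "z \<bullet>c kraus_image d (kraus d x) (diag_vec d g) m
      = z $ (m*d) * (of_real (decay_amp x m) * cnj (g m))" if "m \<in> {1..<d}" for m
    using that pair_index_less[of m d 0]
    by (simp add: kraus_image_pos cscalar_prod_smult_unit_vec[OF z])
  then show ?thesis
    unfolding sum_lessThan_split_0[OF d, of "\<lambda>m. (cmod (z \<bullet>c _ m))\<^sup>2"]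
    by (simp add: kraus_image_0 cscalar_prod_diag_vec[OF z] mult_ac norm_mult power_mult_distrib)
qed

lemma sum_sq_cscalar_kraus_dual_image:
  assumes d: "0 < d" and z: "z \<in> carrier_vec (d*d)"
  shows "(\<Sum>m<d. (cmod (z \<bullet>c kraus_image d (kraus_dual d x) (diag_vec d g) m))\<^sup>2)
    = (cmod (\<Sum>a<d. z $ (a*d + a) * of_real (kraus0_diag x a) * cnj (g a)))\<^sup>2
      + (\<Sum>m\<in>{1..<d}. (cmod (z $ m))\<^sup>2 * (decay_amp x m * cmod (g 0))\<^sup>2)"
proof -
  have "z \<bullet>c kraus_image d (kraus_dual d x) (diag_vec d g) m
      = z $ m * (of_real (decay_amp x m) * cnj (g 0))" if "m \<in> {1..<d}" for m
    using that pair_index_less[of 0 d m]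
    by (simp add: kraus_dual_image_pos cscalar_prod_smult_unit_vec[OF z])
  moreover have "kraus_image d (kraus_dual d x) (diag_vec d g) 0 = kraus_image d (kraus d x) (diag_vec d g) 0"
    by (simp add: kraus_image_def kraus_dual_0)
  ultimately show ?thesis
    unfolding sum_lessThan_split_0[OF d, of "\<lambda>m. (cmod (z \<bullet>c _ m))\<^sup>2"]
    by (simp add: kraus_image_0 cscalar_prod_diag_vec[OF z] mult_ac norm_mult power_mult_distrib)
qed

lemma max_entangled_scaled_diag_le:
  assumes me: "max_entangled d \<Phi>" and a: "a < d"
  shows "sqrt (real d) * cmod (\<Phi> $ (a*d + a)) \<le> 1"
proof -
  have "(cmod (\<Phi> $ (a*d + a)))\<^sup>2 \<le> (\<Sum>b<d. (cmod (\<Phi> $ (a*d + b)))\<^sup>2)"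
    using a by (intro member_le_sum) auto
  then have "real d * (cmod (\<Phi> $ (a*d + a)))\<^sup>2 \<le> real d * (1 / real d)"
    using max_entangled_row_norm[OF me a] by (intro mult_left_mono) auto
  then have "(sqrt (real d) * cmod (\<Phi> $ (a*d + a)))\<^sup>2 \<le> 1"
    using a by (simp add: power_mult_distrib)
  then show ?thesis by (simp add: abs_square_le_1)
qed

lemma max_entangled_off_diag_le:
  assumes me: "max_entangled d \<Phi>" and a: "a < d" and b: "b < d" and "b \<noteq> a"
  shows "real d * (cmod (\<Phi> $ (a*d + b)))\<^sup>2 \<le> 1 - (sqrt (real d) * cmod (\<Phi> $ (a*d + a)))\<^sup>2"
proof -
  have "(cmod (\<Phi> $ (a*d + a)))\<^sup>2 + (cmod (\<Phi> $ (a*d + b)))\<^sup>2 = (\<Sum>c\<in>{a,b}. (cmod (\<Phi> $ (a*d + c)))\<^sup>2)"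
    using \<open>b \<noteq> a\<close> by simp
  also have "\<dots> \<le> (\<Sum>c<d. (cmod (\<Phi> $ (a*d + c)))\<^sup>2)"
    using a b by (intro sum_mono2) auto
  finally have "real d * ((cmod (\<Phi> $ (a*d + a)))\<^sup>2 + (cmod (\<Phi> $ (a*d + b)))\<^sup>2) \<le> real d * (1 / real d)"
    using max_entangled_row_norm[OF me a] by (intro mult_left_mono) auto
  then show ?thesis
    using a by (simp add: power_mult_distrib distrib_left)
qed

lemma double_le_square_diff:
  fixes S T D :: real
  assumes "0 \<le> D" and "D \<le> S - T" and "0 \<le> T" and "2 \<le> 2*S - D"
  shows "2 * D \<le> S\<^sup>2 - T\<^sup>2"
proof -
  (* S^2 - T^2 = D (2S - D) + (S - T - D) (S + T - D) *)
  have "0 \<le> (S - T - D) * (S + T - D)" using assms by simp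
  moreover have "D * 2 \<le> D * (2*S - D)" using assms by (intro mult_left_mono) auto
  ultimately show ?thesis by (simp add: power2_eq_square algebra_simps)
qed

lemma weighted_sum_square_bound:
  fixes a b q :: "nat \<Rightarrow> real"
  assumes d: "0 < d" and a0: "a 0 = 1" and q: "\<And>i. i < d \<Longrightarrow> 0 \<le> q i \<and> q i \<le> 1"
    and ab: "\<And>m. 0 < m \<Longrightarrow> m < d \<Longrightarrow> 0 \<le> a m \<and> b m \<le> a m"
  shows "(\<Sum>i<d. a i * q i)\<^sup>2 + (\<Sum>m\<in>{1..<d}. b m * (1 - (q m)\<^sup>2)) \<le> (\<Sum>i<d. a i)\<^sup>2"
proof -
  define A where "A = (\<Sum>m\<in>{1..<d}. a m)"
  define B where "B = (\<Sum>m\<in>{1..<d}. a m * q m)"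
  have S: "(\<Sum>i<d. a i) = 1 + A" and T: "(\<Sum>i<d. a i * q i) = q 0 + B"
    unfolding A_def B_def sum_lessThan_split_0[OF d] a0 by simp_all
  have "0 \<le> B" unfolding B_def using q ab by (intro sum_nonneg) auto
  moreover have "B \<le> A" unfolding A_def B_def
    using q ab by (intro sum_mono) (auto intro: mult_left_le)
  moreover have "0 \<le> q 0" "q 0 \<le> 1" using q[OF d] by auto
  ultimately have "2 * (A - B) \<le> (\<Sum>i<d. a i)\<^sup>2 - (\<Sum>i<d. a i * q i)\<^sup>2"
    unfolding S T by (intro double_le_square_diff) auto
  moreover have "(\<Sum>m\<in>{1..<d}. b m * (1 - (q m)\<^sup>2)) \<le> 2 * (A - B)"
    unfolding A_def B_def sum_subtractf[symmetric] sum_distrib_left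
  proof (rule sum_mono)
    fix m assume "m \<in> {1..<d}"
    then have qm: "0 \<le> q m" "q m \<le> 1" and am: "0 \<le> a m" "b m \<le> a m" using q ab by auto
    have "b m * (1 + q m) \<le> a m * 2"
      using qm am by (intro mult_mono) auto
    then have "b m * (1 + q m) * (1 - q m) \<le> a m * 2 * (1 - q m)"
      using qm by (intro mult_right_mono) auto
    then show "b m * (1 - (q m)\<^sup>2) \<le> 2 * (a m - a m * q m)"
      by (simp add: power2_eq_square algebra_simps)
  qed
  ultimately show ?thesis by linarith
qed

section \<open>Largest eigenvalues and the singlet fraction\<close>

definition kraus0_norm2 :: "nat \<Rightarrow> (nat \<Rightarrow> real) \<Rightarrow> real" where
  "kraus0_norm2 d x = (\<Sum>a<d. (kraus0_diag x a)\<^sup>2)"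

(* sqrt d (I (x) A_0) |Phi+>, the top eigenvector of rho_{Phi+,Omega} and of rho_{Phi+,hat Omega} *)
definition kraus0_diag_vec :: "nat \<Rightarrow> (nat \<Rightarrow> real) \<Rightarrow> complex vec" where
  "kraus0_diag_vec d x = diag_vec d (\<lambda>a. of_real (kraus0_diag x a))"

lemma cscalar_prod_smult_kraus0_diag_vec_self:
  "(c \<cdot>\<^sub>v kraus0_diag_vec d x) \<bullet>c (c \<cdot>\<^sub>v kraus0_diag_vec d x) = of_real ((cmod c)\<^sup>2 * kraus0_norm2 d x)"
  unfolding kraus0_diag_vec_def smult_diag_vec cscalar_prod_diag_vec_self
  by (simp add: kraus0_norm2_def sum_distrib_left norm_mult power_mult_distrib del: of_real_power)

locale decay_channel =
  fixes d :: nat and x :: "nat \<Rightarrow> real"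
  assumes two_le_dim: "2 \<le> d"
    and x_bounds: "\<And>m. 0 < m \<Longrightarrow> m < d \<Longrightarrow> 0 < x m \<and> x m < 1"
begin

lemma dim_pos: "0 < d"
  using two_le_dim by simp

lemma kraus0_diag_nonneg: "a < d \<Longrightarrow> 0 \<le> kraus0_diag x a"
  using x_bounds[of a] by (cases "a = 0") (auto simp: kraus0_diag_def)

lemma decay_amp_sq: "0 < m \<Longrightarrow> m < d \<Longrightarrow> (decay_amp x m)\<^sup>2 = 1 - (x m)\<^sup>2"
  using x_bounds[of m] by (simp add: decay_amp_def abs_square_le_1)

lemma kraus0_norm2_ge_1: "1 \<le> kraus0_norm2 d x"
  unfolding kraus0_norm2_def sum_lessThan_split_0[OF dim_pos]
  by (simp add: kraus0_diag_def sum_nonneg)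

lemma decay_amp_sq_less:
  assumes "0 < m" and "m < d"
  shows "(decay_amp x m)\<^sup>2 < kraus0_norm2 d x"
proof -
  have "0 < (x m)\<^sup>2" using x_bounds[OF assms] by simp
  then show ?thesis using decay_amp_sq[OF assms] kraus0_norm2_ge_1 by linarith
qed

lemma diagonal_offdiagonal_bound:
  assumes inj: "inj_on q {1..<d}" and range: "q ` {1..<d} \<subseteq> {..<d*d}"
    and off_diag: "\<And>a m. a < d \<Longrightarrow> m \<in> {1..<d} \<Longrightarrow> a*d + a \<noteq> q m"
  shows "(cmod (\<Sum>a<d. z $ (a*d + a) * of_real (kraus0_diag x a)))\<^sup>2
      + (\<Sum>m\<in>{1..<d}. (cmod (z $ q m))\<^sup>2 * (decay_amp x m)\<^sup>2)
    \<le> kraus0_norm2 d x * (\<Sum>i<d*d. (cmod (z $ i))\<^sup>2)"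
proof -
  define f where "f i = (cmod (z $ i))\<^sup>2" for i
  let ?diag = "\<lambda>a. a*d + a"
  have "cmod (\<Sum>a<d. z $ (a*d + a) * of_real (kraus0_diag x a))
      \<le> (\<Sum>a<d. kraus0_diag x a * cmod (z $ (a*d + a)))"
    by (rule order_trans[OF norm_sum]) (auto intro!: sum_mono simp: norm_mult kraus0_diag_nonneg)
  then have "(cmod (\<Sum>a<d. z $ (a*d + a) * of_real (kraus0_diag x a)))\<^sup>2
      \<le> (\<Sum>a<d. kraus0_diag x a * cmod (z $ (a*d + a)))\<^sup>2"
    by (rule power_mono) simp
  also have "\<dots> \<le> kraus0_norm2 d x * (\<Sum>a<d. f (?diag a))"
    unfolding kraus0_norm2_def f_def by (rule Cauchy_Schwarz_ineq_sum)
  finally have diag: "(cmod (\<Sum>a<d. z $ (a*d + a) * of_real (kraus0_diag x a)))\<^sup>2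
      \<le> kraus0_norm2 d x * (\<Sum>a<d. f (?diag a))" .
  have off: "(\<Sum>m\<in>{1..<d}. (cmod (z $ q m))\<^sup>2 * (decay_amp x m)\<^sup>2)
      \<le> kraus0_norm2 d x * (\<Sum>m\<in>{1..<d}. f (q m))"
    unfolding sum_distrib_left f_def
  proof (rule sum_mono)
    fix m assume "m \<in> {1..<d}"
    then have "(decay_amp x m)\<^sup>2 \<le> kraus0_norm2 d x" using decay_amp_sq_less[of m] by simp
    then show "(cmod (z $ q m))\<^sup>2 * (decay_amp x m)\<^sup>2 \<le> kraus0_norm2 d x * (cmod (z $ q m))\<^sup>2"
      by (simp add: mult.commute mult_right_mono)
  qed
  have "inj_on ?diag {..<d}"
    by (rule inj_onI) (use pair_index_eq_iff in auto)
  then have "(\<Sum>a<d. f (?diag a)) + (\<Sum>m\<in>{1..<d}. f (q m)) = sum f (?diag ` {..<d} \<union> q ` {1..<d})"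
    using inj off_diag by (subst sum.union_disjoint) (auto simp: sum.reindex)
  also have "\<dots> \<le> (\<Sum>i<d*d. f i)"
    using range pair_index_less by (intro sum_mono2) (auto simp: f_def)
  finally have "kraus0_norm2 d x * ((\<Sum>a<d. f (?diag a)) + (\<Sum>m\<in>{1..<d}. f (q m)))
      \<le> kraus0_norm2 d x * (\<Sum>i<d*d. f i)"
    using kraus0_norm2_ge_1 by (intro mult_left_mono) auto
  then show ?thesis using diag off unfolding f_def by (simp add: distrib_left)
qed

lemma diagonal_first_column_bound:
  "(cmod (\<Sum>a<d. z $ (a*d + a) * of_real (kraus0_diag x a)))\<^sup>2
      + (\<Sum>m\<in>{1..<d}. (cmod (z $ (m*d)))\<^sup>2 * (decay_amp x m)\<^sup>2)
    \<le> kraus0_norm2 d x * (\<Sum>i<d*d. (cmod (z $ i))\<^sup>2)"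
proof (rule diagonal_offdiagonal_bound)
  show "inj_on (\<lambda>m. m*d) {1..<d}" using dim_pos by (auto intro!: inj_onI)
  show "(\<lambda>m. m*d) ` {1..<d} \<subseteq> {..<d*d}" using pair_index_less[of _ d 0] by auto
  show "a*d + a \<noteq> m*d" if "a < d" and "m \<in> {1..<d}" for a m
    using pair_index_eq_iff[of a d 0 a m] that by auto
qed

lemma diagonal_first_row_bound:
  "(cmod (\<Sum>a<d. z $ (a*d + a) * of_real (kraus0_diag x a)))\<^sup>2
      + (\<Sum>m\<in>{1..<d}. (cmod (z $ m))\<^sup>2 * (decay_amp x m)\<^sup>2)
    \<le> kraus0_norm2 d x * (\<Sum>i<d*d. (cmod (z $ i))\<^sup>2)"
proof (rule diagonal_offdiagonal_bound)
  show "(\<lambda>m. m) ` {1..<d} \<subseteq> {..<d*d}" using pair_index_less[of 0 d] by auto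
  show "a*d + a \<noteq> m" if "a < d" and "m \<in> {1..<d}" for a m
    using pair_index_eq_iff[of a d m a 0] that by auto
qed simp

lemma sum_sq_cscalar_phi_plus_image_le:
  assumes K: "K = kraus d x \<or> K = kraus_dual d x" and z: "z \<in> carrier_vec (d*d)"
  shows "(\<Sum>m<d. (cmod (z \<bullet>c kraus_image d K (phi_plus d) m))\<^sup>2)
    \<le> kraus0_norm2 d x / d * (\<Sum>i<d*d. (cmod (z $ i))\<^sup>2)"
proof -
  define c where "c = (of_real (1 / sqrt (real d)) :: complex)"
  define D where "D = (cmod (\<Sum>a<d. z $ (a*d + a) * of_real (kraus0_diag x a)))\<^sup>2"
  define N where "N = (\<Sum>i<d*d. (cmod (z $ i))\<^sup>2)"
  have diag: "(cmod (\<Sum>a<d. z $ (a*d + a) * of_real (kraus0_diag x a) * cnj c))\<^sup>2 = D / d"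
    unfolding sum_distrib_right[symmetric] norm_mult complex_mod_cnj power_mult_distrib
      c_def cmod_inv_sqrt_sq D_def by simp
  have off: "(\<Sum>m\<in>{1..<d}. (cmod (z $ q m))\<^sup>2 * (decay_amp x m * cmod c)\<^sup>2)
      = (\<Sum>m\<in>{1..<d}. (cmod (z $ q m))\<^sup>2 * (decay_amp x m)\<^sup>2) / d" for q
    unfolding power_mult_distrib c_def cmod_inv_sqrt_sq by (simp add: sum_divide_distrib)
  from K consider "K = kraus d x" | "K = kraus_dual d x" by blast
  then show ?thesis
  proof cases
    case 1
    show ?thesis
      unfolding 1 phi_plus_eq_diag_vec sum_sq_cscalar_kraus_image[OF dim_pos z] c_def[symmetric]
        diag off N_def[symmetric]
      using divide_right_mono[OF diagonal_first_column_bound[of z, folded D_def N_def], of "real d"]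
      by (simp add: add_divide_distrib)
  next
    case 2
    show ?thesis
      unfolding 2 phi_plus_eq_diag_vec sum_sq_cscalar_kraus_dual_image[OF dim_pos z] c_def[symmetric]
        diag off N_def[symmetric]
      using divide_right_mono[OF diagonal_first_row_bound[of z, folded D_def N_def], of "real d"]
      by (simp add: add_divide_distrib)
  qed
qed

lemma kraus0_diag_vec_eigenvector:
  assumes K: "K = kraus d x \<or> K = kraus_dual d x"
  shows "ext_channel d K (proj (phi_plus d)) *\<^sub>v kraus0_diag_vec d x
    = of_real (kraus0_norm2 d x / d) \<cdot>\<^sub>v kraus0_diag_vec d x"
proof -
  define c where "c = (of_real (1 / sqrt (real d)) :: complex)"
  define v where "v = kraus0_diag_vec d x"
  define W where "W = kraus_image d K (phi_plus d)"
  have v: "v \<in> carrier_vec (d*d)" by (simp add: v_def kraus0_diag_vec_def)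
  have W: "W m \<in> carrier_vec (d*d)" for m
    unfolding W_def by (rule kraus_image_carrier[OF kraus_or_dual_carrier[OF K]])
  have W0: "W 0 = c \<cdot>\<^sub>v v"
    by (simp add: W_def v_def c_def kraus_or_dual_image_0[OF K] phi_plus_eq_diag_vec
        kraus_image_0 kraus0_diag_vec_def smult_diag_vec mult.commute)
  have Wm: "v \<bullet>c W m = 0" if m: "m \<in> {1..<d}" for m
  proof -
    have "v $ (m*d) = 0" and "v $ m = 0"
      using m diag_vec_pair_index[of m d 0] diag_vec_pair_index[of 0 d m]
      by (auto simp: v_def kraus0_diag_vec_def)
    then show ?thesis
      using K m v pair_index_less[of m d 0] pair_index_less[of 0 d m]
      by (auto simp: W_def phi_plus_eq_diag_vec kraus_image_pos kraus_dual_image_pos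
          cscalar_prod_smult_unit_vec)
  qed
  have "v \<bullet>c W 0 = c * of_real (kraus0_norm2 d x)"
    by (simp add: W0 v_def kraus0_diag_vec_def smult_diag_vec cscalar_prod_diag_vec
        diag_vec_pair_index kraus0_norm2_def c_def sum_distrib_left power2_eq_square mult_ac)
  moreover have "ext_channel d K (proj (phi_plus d)) = proj_sum (d*d) d W"
    unfolding W_def
    by (rule ext_channel_proj[OF kraus_or_dual_carrier[OF K]]) (simp add: phi_plus_eq_diag_vec)
  ultimately have "ext_channel d K (proj (phi_plus d)) *\<^sub>v v
      = vec (d*d) (\<lambda>i. c * of_real (kraus0_norm2 d x) * W 0 $ i)"
    by (simp add: proj_sum_mult_vec[OF v W] sum_lessThan_split_0[OF dim_pos] Wm)
  also have "\<dots> = (c * c * of_real (kraus0_norm2 d x)) \<cdot>\<^sub>v v"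
    using v by (intro eq_vecI) (simp_all add: W0 mult_ac)
  also have "c * c * of_real (kraus0_norm2 d x) = of_real (kraus0_norm2 d x / d)"
    unfolding c_def inv_sqrt_mult_self by simp
  finally show ?thesis unfolding v_def .
qed

lemma kraus0_diag_vec_nonzero: "kraus0_diag_vec d x \<noteq> 0\<^sub>v (d*d)"
proof
  assume "kraus0_diag_vec d x = 0\<^sub>v (d*d)"
  then have "kraus0_diag_vec d x $ (0*d + 0) = 0"
    using pair_index_less[OF dim_pos dim_pos] by (simp del: add_0_right)
  then show False
    using diag_vec_pair_index[OF dim_pos dim_pos]
    by (simp add: kraus0_diag_vec_def kraus0_diag_def del: add_0_right)
qed

lemma lambda_max_phi_plus:
  assumes K: "K = kraus d x \<or> K = kraus_dual d x"
  shows "lambda_max (ext_channel d K (proj (phi_plus d))) = kraus0_norm2 d x / d"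
proof (rule lambda_max_eqI)
  have rho: "ext_channel d K (proj (phi_plus d)) = proj_sum (d*d) d (kraus_image d K (phi_plus d))"
    by (rule ext_channel_proj[OF kraus_or_dual_carrier[OF K]]) (simp add: phi_plus_eq_diag_vec)
  show "ext_channel d K (proj (phi_plus d)) \<in> carrier_mat (d*d) (d*d)"
    unfolding rho by (rule proj_sum_carrier)
  show "eigenvalue (ext_channel d K (proj (phi_plus d))) (of_real (kraus0_norm2 d x / d))"
    unfolding eigenvalue_def eigenvector_def
    using kraus0_diag_vec_eigenvector[OF K] kraus0_diag_vec_nonzero
    by (intro exI[of _ "kraus0_diag_vec d x"]) (simp add: rho proj_sum_def kraus0_diag_vec_def)
  fix e assume "eigenvalue (ext_channel d K (proj (phi_plus d))) e"
  then show "Re e \<le> kraus0_norm2 d x / d"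
    unfolding rho
    by (rule eigenvalue_proj_sum_le[OF _ kraus_image_carrier[OF kraus_or_dual_carrier[OF K]]
          sum_sq_cscalar_phi_plus_image_le[OF K]])
qed

lemma kraus_dual_phi_plus_mult_vec_index:
  assumes \<psi>: "\<psi> \<in> carrier_vec (d*d)" and k: "k < d*d"
  shows "(ext_channel d (kraus_dual d x) (proj (phi_plus d)) *\<^sub>v \<psi>) $ k
    = of_real (1 / real d) * ((\<psi> \<bullet>c kraus0_diag_vec d x) * kraus0_diag_vec d x $ k
      + (if k \<in> {1..<d} then of_real ((decay_amp x k)\<^sup>2) * \<psi> $ k else 0))"
proof -
  define c where "c = (of_real (1 / sqrt (real d)) :: complex)"
  define v where "v = kraus0_diag_vec d x"
  define W where "W = kraus_image d (kraus_dual d x) (phi_plus d)"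
  have v: "v \<in> carrier_vec (d*d)" by (simp add: v_def kraus0_diag_vec_def)
  have W: "W m \<in> carrier_vec (d*d)" for m
    unfolding W_def by (rule kraus_image_carrier[OF kraus_dual_carrier])
  have "cnj c = c" by (simp add: c_def)
  have "W 0 = c \<cdot>\<^sub>v v"
    by (simp add: W_def v_def c_def kraus_or_dual_image_0[OF disjI2[OF refl]] phi_plus_eq_diag_vec
        kraus_image_0 kraus0_diag_vec_def smult_diag_vec mult.commute)
  then have "\<psi> \<bullet>c W 0 * W 0 $ k = c * c * ((\<psi> \<bullet>c v) * v $ k)"
    using k v \<open>cnj c = c\<close> by (simp add: scalar_prod_def sum_distrib_left mult_ac)
  moreover have "\<psi> \<bullet>c W m * W m $ k = c * c * (if k = m then of_real ((decay_amp x m)\<^sup>2) * \<psi> $ k else 0)"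
    if "m \<in> {1..<d}" for m
  proof -
    have "W m = (of_real (decay_amp x m) * c) \<cdot>\<^sub>v unit_vec (d*d) m"
      using that by (simp add: W_def phi_plus_eq_diag_vec kraus_dual_image_pos c_def)
    then show ?thesis
      using that k pair_index_less[of 0 d m] \<open>cnj c = c\<close>
      by (simp add: cscalar_prod_smult_unit_vec[OF \<psi>] power2_eq_square mult_ac)
  qed
  moreover have "ext_channel d (kraus_dual d x) (proj (phi_plus d)) = proj_sum (d*d) d W"
    unfolding W_def by (rule ext_channel_proj[OF kraus_dual_carrier]) (simp add: phi_plus_eq_diag_vec)
  ultimately show ?thesis
    using k unfolding inv_sqrt_mult_self[symmetric] c_def[symmetric] v_def[symmetric]
    by (simp add: proj_sum_mult_vec[OF \<psi> W] sum_lessThan_split_0[OF dim_pos]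
        sum_distrib_left[symmetric] distrib_left)
qed

lemma kraus_dual_eigenvector_eq_smult:
  assumes \<psi>: "\<psi> \<in> carrier_vec (d*d)"
    and ev: "ext_channel d (kraus_dual d x) (proj (phi_plus d)) *\<^sub>v \<psi>
      = of_real (kraus0_norm2 d x / d) \<cdot>\<^sub>v \<psi>"
  shows "\<psi> = (\<psi> \<bullet>c kraus0_diag_vec d x / of_real (kraus0_norm2 d x)) \<cdot>\<^sub>v kraus0_diag_vec d x"
proof -
  define S where "S = kraus0_norm2 d x"
  define v where "v = kraus0_diag_vec d x"
  define C where "C = \<psi> \<bullet>c v"
  have v: "v \<in> carrier_vec (d*d)" by (simp add: v_def kraus0_diag_vec_def)
  have S: "S \<noteq> 0" using kraus0_norm2_ge_1 by (simp add: S_def)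
  have entry: "of_real S * \<psi> $ k
      = C * v $ k + (if k \<in> {1..<d} then of_real ((decay_amp x k)\<^sup>2) * \<psi> $ k else 0)"
    if k: "k < d*d" for k
    using arg_cong[OF ev, of "\<lambda>w. of_real (real d) * w $ k"] k \<psi> dim_pos
    by (simp add: kraus_dual_phi_plus_mult_vec_index[OF \<psi> k] S_def C_def v_def)
  (* Off the diagonal, S psi_k equals (decay_amp x k)^2 psi_k in the first row (k < d)
     and 0 elsewhere, while (decay_amp x k)^2 < S. *)
  have "\<psi> = (C / of_real S) \<cdot>\<^sub>v v"
  proof (rule eq_vecI)
    fix k assume "k < dim_vec ((C / of_real S) \<cdot>\<^sub>v v)"
    then have k: "k < d*d" using v by simp
    show "\<psi> $ k = ((C / of_real S) \<cdot>\<^sub>v v) $ k"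
    proof (cases "k \<in> {1..<d}")
      case True
      then have "v $ k = 0"
        using diag_vec_pair_index[of 0 d k] by (auto simp: v_def kraus0_diag_vec_def)
      then have "of_real (S - (decay_amp x k)\<^sup>2) * \<psi> $ k = 0"
        using entry[OF k] True by (simp add: algebra_simps)
      moreover have "S - (decay_amp x k)\<^sup>2 \<noteq> 0"
        using decay_amp_sq_less[of k] True by (simp add: S_def)
      ultimately have "\<psi> $ k = 0" by (simp del: of_real_power)
      then show ?thesis using \<open>v $ k = 0\<close> k v by simp
    next
      case False
      then have "of_real S * \<psi> $ k = C * v $ k"
        using entry[OF k] by (simp only: if_not_P[OF False] if_False add_0_right)
      then show ?thesis using k v S by (simp add: field_simps)
    qed
  qed (use v \<psi> in simp)
  then show ?thesis by (simp add: C_def S_def v_def)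
qed

lemma not_max_entangled_smult_kraus0_diag_vec: "\<not> max_entangled d (c \<cdot>\<^sub>v kraus0_diag_vec d x)"
proof
  assume "max_entangled d (c \<cdot>\<^sub>v kraus0_diag_vec d x)"
  then have "\<forall>a<d. (cmod (c * of_real (kraus0_diag x a)))\<^sup>2 = 1 / real d"
    by (simp add: kraus0_diag_vec_def smult_diag_vec max_entangled_diag_vec_iff[OF dim_pos])
  then have "(cmod c)\<^sup>2 = 1 / real d" and "(cmod c)\<^sup>2 * (x 1)\<^sup>2 = 1 / real d"
    using dim_pos two_le_dim by (auto simp: kraus0_diag_def norm_mult power_mult_distrib dest: spec[of _ 0] spec[of _ 1])
  moreover have "0 < x 1" "x 1 < 1" using x_bounds[of 1] two_le_dim by auto
  then have "(x 1)\<^sup>2 < 1" by (simp add: power_less_one_iff abs_square_less_1)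
  ultimately show False using dim_pos by simp
qed

lemma kraus_quadratic_form_smult_kraus0_diag_vec:
  assumes \<Phi>: "\<Phi> \<in> carrier_vec (d*d)"
  shows "Re ((ext_channel d (kraus d x) (proj (c \<cdot>\<^sub>v kraus0_diag_vec d x)) *\<^sub>v \<Phi>) \<bullet>c \<Phi>)
    = (cmod c)\<^sup>2 * ((cmod (\<Sum>a<d. \<Phi> $ (a*d + a) * of_real ((kraus0_diag x a)\<^sup>2)))\<^sup>2
      + (\<Sum>m\<in>{1..<d}. (cmod (\<Phi> $ (m*d)))\<^sup>2 * (decay_amp x m * kraus0_diag x m)\<^sup>2))"
proof -
  define g where "g = (\<lambda>a. c * of_real (kraus0_diag x a))"
  have \<psi>: "c \<cdot>\<^sub>v kraus0_diag_vec d x = diag_vec d g"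
    by (simp add: kraus0_diag_vec_def smult_diag_vec g_def)
  have "Re ((ext_channel d (kraus d x) (proj (diag_vec d g)) *\<^sub>v \<Phi>) \<bullet>c \<Phi>)
      = (\<Sum>m<d. (cmod (\<Phi> \<bullet>c kraus_image d (kraus d x) (diag_vec d g) m))\<^sup>2)"
    unfolding ext_channel_proj[OF kraus_carrier diag_vec_carrier]
    by (simp add: proj_sum_quadratic_form[of \<Phi> "d*d" d "kraus_image d (kraus d x) (diag_vec d g)",
          OF \<Phi> kraus_image_carrier[OF kraus_carrier]] del: of_real_sum)
  also have "\<dots> = (cmod (cnj c * (\<Sum>a<d. \<Phi> $ (a*d + a) * of_real ((kraus0_diag x a)\<^sup>2))))\<^sup>2
      + (\<Sum>m\<in>{1..<d}. (cmod c)\<^sup>2 * ((cmod (\<Phi> $ (m*d)))\<^sup>2 * (decay_amp x m * kraus0_diag x m)\<^sup>2))"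
    unfolding sum_sq_cscalar_kraus_image[OF dim_pos \<Phi>]
    by (simp add: g_def sum_distrib_left norm_mult power_mult_distrib power2_eq_square mult_ac)
  finally show ?thesis
    unfolding \<psi> by (simp add: norm_mult power_mult_distrib sum_distrib_left[symmetric] distrib_left)
qed

lemma kraus0_weighted_sum_square_bound:
  assumes q: "\<And>i. i < d \<Longrightarrow> 0 \<le> q i \<and> q i \<le> 1"
  shows "(\<Sum>i<d. (kraus0_diag x i)\<^sup>2 * q i)\<^sup>2
      + (\<Sum>m\<in>{1..<d}. (decay_amp x m * kraus0_diag x m)\<^sup>2 * (1 - (q m)\<^sup>2))
    \<le> (kraus0_norm2 d x)\<^sup>2"
  unfolding kraus0_norm2_def
proof (rule weighted_sum_square_bound[OF dim_pos _ q])
  fix m assume m: "0 < m" "m < d"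
  then have "(decay_amp x m)\<^sup>2 \<le> 1" by (simp add: decay_amp_sq)
  then show "0 \<le> (kraus0_diag x m)\<^sup>2 \<and> (decay_amp x m * kraus0_diag x m)\<^sup>2 \<le> (kraus0_diag x m)\<^sup>2"
    by (simp add: power_mult_distrib mult_left_le_one_le)
qed (simp add: kraus0_diag_def)

lemma max_entangled_kraus0_form_le:
  assumes me: "max_entangled d \<Phi>"
  shows "(cmod (\<Sum>a<d. \<Phi> $ (a*d + a) * of_real ((kraus0_diag x a)\<^sup>2)))\<^sup>2
      + (\<Sum>m\<in>{1..<d}. (cmod (\<Phi> $ (m*d)))\<^sup>2 * (decay_amp x m * kraus0_diag x m)\<^sup>2)
    \<le> (kraus0_norm2 d x)\<^sup>2 / d"
proof -
  define q where "q i = sqrt (real d) * cmod (\<Phi> $ (i*d + i))" for i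
  have q: "0 \<le> q i \<and> q i \<le> 1" if "i < d" for i
    using max_entangled_scaled_diag_le[OF me that] by (simp add: q_def)
  note key = kraus0_weighted_sum_square_bound[of q, OF q]
  have diag: "cmod (\<Sum>a<d. \<Phi> $ (a*d + a) * of_real ((kraus0_diag x a)\<^sup>2))
      \<le> (\<Sum>i<d. (kraus0_diag x i)\<^sup>2 * cmod (\<Phi> $ (i*d + i)))"
    by (rule order_trans[OF norm_sum]) (simp add: norm_mult norm_power mult.commute)
  have "sqrt (real d) * cmod (\<Sum>a<d. \<Phi> $ (a*d + a) * of_real ((kraus0_diag x a)\<^sup>2))
      \<le> (\<Sum>i<d. (kraus0_diag x i)\<^sup>2 * q i)"
    using mult_left_mono[OF diag, of "sqrt (real d)"] by (simp add: q_def sum_distrib_left mult_ac)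
  then have "real d * (cmod (\<Sum>a<d. \<Phi> $ (a*d + a) * of_real ((kraus0_diag x a)\<^sup>2)))\<^sup>2
      \<le> (\<Sum>i<d. (kraus0_diag x i)\<^sup>2 * q i)\<^sup>2"
    using power_mono[of _ _ 2] by (fastforce simp: power_mult_distrib)
  moreover have "real d * (\<Sum>m\<in>{1..<d}. (cmod (\<Phi> $ (m*d)))\<^sup>2 * (decay_amp x m * kraus0_diag x m)\<^sup>2)
      \<le> (\<Sum>m\<in>{1..<d}. (decay_amp x m * kraus0_diag x m)\<^sup>2 * (1 - (q m)\<^sup>2))"
    unfolding sum_distrib_left
  proof (rule sum_mono)
    fix m assume m: "m \<in> {1..<d}"
    then have row: "real d * (cmod (\<Phi> $ (m*d)))\<^sup>2 \<le> 1 - (q m)\<^sup>2"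
      using max_entangled_off_diag_le[OF me, of m 0] by (simp add: q_def)
    show "real d * ((cmod (\<Phi> $ (m*d)))\<^sup>2 * (decay_amp x m * kraus0_diag x m)\<^sup>2)
        \<le> (decay_amp x m * kraus0_diag x m)\<^sup>2 * (1 - (q m)\<^sup>2)"
      using mult_right_mono[OF row, of "(decay_amp x m * kraus0_diag x m)\<^sup>2"] by (simp add: mult_ac)
  qed
  ultimately have "real d * ((cmod (\<Sum>a<d. \<Phi> $ (a*d + a) * of_real ((kraus0_diag x a)\<^sup>2)))\<^sup>2
      + (\<Sum>m\<in>{1..<d}. (cmod (\<Phi> $ (m*d)))\<^sup>2 * (decay_amp x m * kraus0_diag x m)\<^sup>2))
    \<le> (kraus0_norm2 d x)\<^sup>2"
    using key by (simp add: distrib_left)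
  then show ?thesis using dim_pos by (simp add: field_simps)
qed

lemma singlet_fraction_smult_kraus0_diag_vec:
  assumes c: "(cmod c)\<^sup>2 = 1 / kraus0_norm2 d x"
  shows "singlet_fraction d (ext_channel d (kraus d x) (proj (c \<cdot>\<^sub>v kraus0_diag_vec d x)))
    = kraus0_norm2 d x / d"
  unfolding singlet_fraction_def
proof (rule cSup_eq_maximum)
  let ?\<rho> = "ext_channel d (kraus d x) (proj (c \<cdot>\<^sub>v kraus0_diag_vec d x))"
  define S where "S = kraus0_norm2 d x"
  have S: "0 < S" using kraus0_norm2_ge_1 by (simp add: S_def)
  have "(cmod (\<Sum>a<d. phi_plus d $ (a*d + a) * of_real ((kraus0_diag x a)\<^sup>2)))\<^sup>2
      = (cmod (of_real (1 / sqrt (real d)) * of_real S :: complex))\<^sup>2"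
    by (simp add: phi_plus_eq_diag_vec diag_vec_pair_index S_def kraus0_norm2_def sum_distrib_left)
  also have "\<dots> = S\<^sup>2 / d"
    using S by (simp add: norm_mult norm_divide power_mult_distrib power_divide)
  moreover have "phi_plus d $ (m*d) = 0" if "m \<in> {1..<d}" for m
    using that diag_vec_pair_index[of m d 0] by (simp add: phi_plus_eq_diag_vec)
  ultimately have "Re ((?\<rho> *\<^sub>v phi_plus d) \<bullet>c phi_plus d) = (cmod c)\<^sup>2 * (S\<^sup>2 / d)"
    unfolding kraus_quadratic_form_smult_kraus0_diag_vec[OF phi_plus_carrier] by simp
  also have "(cmod c)\<^sup>2 * (S\<^sup>2 / d) = S / d"
    using c S by (simp add: S_def power2_eq_square)
  finally have at_phi_plus: "Re ((?\<rho> *\<^sub>v phi_plus d) \<bullet>c phi_plus d) = S / d" .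
  show "S / d \<in> {Re ((?\<rho> *\<^sub>v \<Phi>) \<bullet>c \<Phi>) | \<Phi>. max_entangled d \<Phi>}"
    by (rule CollectI, rule exI[of _ "phi_plus d"]) (use at_phi_plus max_entangled_phi_plus[OF dim_pos] in simp)
  fix y assume "y \<in> {Re ((?\<rho> *\<^sub>v \<Phi>) \<bullet>c \<Phi>) | \<Phi>. max_entangled d \<Phi>}"
  then obtain \<Phi> where y: "y = Re ((?\<rho> *\<^sub>v \<Phi>) \<bullet>c \<Phi>)" and me: "max_entangled d \<Phi>"
    by blast
  have \<Phi>: "\<Phi> \<in> carrier_vec (d*d)"
    using me unfolding max_entangled_def by (intro carrier_vecI) blast
  have "y \<le> (cmod c)\<^sup>2 * (S\<^sup>2 / d)"
    unfolding y kraus_quadratic_form_smult_kraus0_diag_vec[OF \<Phi>] S_def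
    by (intro mult_left_mono max_entangled_kraus0_form_le[OF me]) simp
  then show "y \<le> S / d" using c S by (simp add: S_def power2_eq_square)
qed

end

theorem lemma4:
  fixes d :: nat and x :: "nat \<Rightarrow> real" and \<psi> :: "complex vec"
  assumes "d \<ge> 3"
    and "\<And>i. 1 \<le> i \<Longrightarrow> i \<le> d - 1 \<Longrightarrow> 0 < x i \<and> x i < 1"
    and "\<exists>i j. 1 \<le> i \<and> i \<le> d - 1 \<and> 1 \<le> j \<and> j \<le> d - 1 \<and> x i \<noteq> x j"
    and "dim_vec \<psi> = d * d" and "\<psi> \<bullet>c \<psi> = 1"
    and "eigenvector (ext_channel d (kraus_dual d x) (proj (phi_plus d))) \<psi>
           (complex_of_real (lambda_max (ext_channel d (kraus_dual d x) (proj (phi_plus d)))))"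
  shows "lambda_max (ext_channel d (kraus d x) (proj (phi_plus d)))
           = singlet_fraction d (ext_channel d (kraus d x) (proj \<psi>))
         \<and> \<not> max_entangled d \<psi>"
proof -
  interpret decay_channel d x
    using assms(1,2) by unfold_locales auto
  define S where "S = kraus0_norm2 d x"
  define c where "c = \<psi> \<bullet>c kraus0_diag_vec d x / of_real S"
  have \<psi>: "\<psi> \<in> carrier_vec (d*d)" using assms(4) by (rule carrier_vecI)
  have "ext_channel d (kraus_dual d x) (proj (phi_plus d)) *\<^sub>v \<psi> = of_real (S / d) \<cdot>\<^sub>v \<psi>"
    using assms(6) lambda_max_phi_plus[of "kraus_dual d x"] by (simp add: eigenvector_def S_def)
  then have \<psi>_eq: "\<psi> = c \<cdot>\<^sub>v kraus0_diag_vec d x"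
    unfolding c_def S_def by (rule kraus_dual_eigenvector_eq_smult[OF \<psi>])
  have "1 = (cmod c)\<^sup>2 * S"
    using assms(5) unfolding \<psi>_eq cscalar_prod_smult_kraus0_diag_vec_self S_def
    by (metis of_real_1 of_real_eq_iff)
  then have "(cmod c)\<^sup>2 = 1 / S"
    using kraus0_norm2_ge_1 by (simp add: S_def field_simps)
  then show ?thesis
    unfolding \<psi>_eq S_def
    by (simp add: lambda_max_phi_plus singlet_fraction_smult_kraus0_diag_vec not_max_entangled_smult_kraus0_diag_vec)
qed

end
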